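(* Let $n\ge1$, $1\le k\le n$, $l\ge1$, $k'=n+1-k$, $d=kk'$, and regard $B=B(l\bar\Lambda_k)$ as the set of semistandard tableaux $(m_{i,i'})_{1\le i\le k,1\le i'\le l}$ with entries in $\{1,\dots,n+1\}$, $m_{i,i'}\le m_{i,i'+1}$, $m_{i,i'}<m_{i+1,i'}$, with its $U_q(A_n)$-crystal structure. For $1\le a\le d$ put $g=\lfloor(a-1)/k'\rfloor$, $r=a-1-k'g$ and $i_a=k-g+r\in\{1,\dots,n\}$. Let $B_0=\{\overline b\}$ where $\overline b$ is the tableau with $m_{i,i'}=i$, $B_a=\bigcup_{n\ge0}\tilde f_{i_a}^nB_{a-1}\setminus\{0\}$, $b_0=\overline b$ and $b_a=\tilde f_{i_a}^{\varphi_{i_a}(b_{a-1})}b_{a-1}$. Then for each $1\le a\le d$: (1) $B_a=\{(m_{i,i'})\in B: m_{i,i'}=i \text{ for all } i<k-g \text{ and all } i',\ m_{k-g,i'}\le k-g+r+1\text{ for all }i'\}$; (2) $b_a$ is the tableau with $m_{i,i'}=i$ for $i<k-g$, $m_{k-g,i'}=k-g+r+1$, and $m_{i,i'}=i+k'$ for $i>k-g$.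
   Context: The crystal structure on $B(l\bar\Lambda_k)$: for a single column ($l=1$), $\tilde e_j$ (resp. $\tilde f_j$) changes an entry $j+1$ to $j$ (resp. $j$ to $j+1$), giving $0$ if there is no such entry or the result is not strictly increasing; for general $l$, $B(l\bar\Lambda_k)$ is embedded in $B(\bar\Lambda_k)^{\otimes l}$ by sending a tableau to (column $l$)$\otimes\cdots\otimes$(column $1$), and the operators are the restrictions of those on the tensor product (Kashiwara's tensor product / signature rule). $\varphi_j(b)=\max\{n:\tilde f_j^nb\neq0\}$. (In the paper these $B_a,b_a$ are the sets $B^{(n+1)}_a$ and elements $b^{(n+1)}_a$ for the perfect crystal $B^{k,l}$ of type $A^{(1)}_n$ at $j=n+1$, where $i^{(n+1)}_a\equiv k-g+r$.) *)

theory Defs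
  imports Main
begin

section \<open>Partial operators (0 of the crystal modelled by None)\<close>

fun opow :: "('a \<Rightarrow> 'a option) \<Rightarrow> nat \<Rightarrow> 'a \<Rightarrow> 'a option" where
  "opow f 0 b = Some b"
| "opow f (Suc n) b = Option.bind (opow f n b) f"

definition strf :: "('a \<Rightarrow> 'a option) \<Rightarrow> 'a \<Rightarrow> nat" where
  "strf f b = (GREATEST n. opow f n b \<noteq> None)"

section \<open>Single column crystal B(Lambda_k): a column is the list of its entries, top to bottom\<close>

definition col_f :: "nat \<Rightarrow> nat list \<Rightarrow> nat list option" where
  "col_f j c = (if j \<in> set c \<and> sorted_wrt (<) (map (\<lambda>x. if x = j then j + 1 else x) c)
                then Some (map (\<lambda>x. if x = j then j + 1 else x) c) else None)"

definition col_e :: "nat \<Rightarrow> nat list \<Rightarrow> nat list option" where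
  "col_e j c = (if j + 1 \<in> set c \<and> sorted_wrt (<) (map (\<lambda>x. if x = j + 1 then j else x) c)
                then Some (map (\<lambda>x. if x = j + 1 then j else x) c) else None)"

section \<open>Tensor powers, Kashiwara's tensor product rule;
  the list [c1, c2, ..., cN] stands for c1 \<otimes> (c2 \<otimes> (... \<otimes> cN))\<close>

text \<open>(phi, epsilon) of a tensor product:
  phi(b1 \<otimes> b2) = phi(b2) + max(0, phi(b1) - eps(b2)),
  eps(b1 \<otimes> b2) = eps(b1) + max(0, eps(b2) - phi(b1)).\<close>
fun tstr :: "nat \<Rightarrow> nat list list \<Rightarrow> nat \<times> nat" where
  "tstr j [] = (0, 0)"
| "tstr j (c # cs) =
     (let p1 = strf (col_f j) c; e1 = strf (col_e j) c; (p2, e2) = tstr j cs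
      in (p2 + (p1 - e2), e1 + (e2 - p1)))"

fun tf :: "nat \<Rightarrow> nat list list \<Rightarrow> nat list list option" where
  "tf j [] = None"
| "tf j (c # cs) =
     (if strf (col_f j) c > snd (tstr j cs)
      then map_option (\<lambda>c'. c' # cs) (col_f j c)
      else map_option (\<lambda>cs'. c # cs') (tf j cs))"

section \<open>Tableaux of shape k x l: m i i' for 1 \<le> i \<le> k, 1 \<le> i' \<le> l, value 0 elsewhere\<close>

type_synonym tableau = "nat \<Rightarrow> nat \<Rightarrow> nat"

definition SSYT :: "nat \<Rightarrow> nat \<Rightarrow> nat \<Rightarrow> tableau set" where
  "SSYT n k l = {m. (\<forall>i i'. 1 \<le> i \<and> i \<le> k \<and> 1 \<le> i' \<and> i' \<le> l \<longrightarrow> 1 \<le> m i i' \<and> m i i' \<le> n + 1)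
     \<and> (\<forall>i i'. 1 \<le> i \<and> i \<le> k \<and> 1 \<le> i' \<and> i' < l \<longrightarrow> m i i' \<le> m i (i' + 1))
     \<and> (\<forall>i i'. 1 \<le> i \<and> i < k \<and> 1 \<le> i' \<and> i' \<le> l \<longrightarrow> m i i' < m (i + 1) i')
     \<and> (\<forall>i i'. \<not> (1 \<le> i \<and> i \<le> k \<and> 1 \<le> i' \<and> i' \<le> l) \<longrightarrow> m i i' = 0)}"

text \<open>tableau \<mapsto> (column l) \<otimes> ... \<otimes> (column 1)\<close>
definition tab_cols :: "nat \<Rightarrow> nat \<Rightarrow> tableau \<Rightarrow> nat list list" where
  "tab_cols k l m = map (\<lambda>i'. map (\<lambda>i. m i i') [1..<k+1]) (rev [1..<l+1])"

definition cols_tab :: "nat \<Rightarrow> nat \<Rightarrow> nat list list \<Rightarrow> tableau" where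
  "cols_tab k l cs = (\<lambda>i i'. if 1 \<le> i \<and> i \<le> k \<and> 1 \<le> i' \<and> i' \<le> l
                            then cs ! (l - i') ! (i - 1) else 0)"

definition tab_f :: "nat \<Rightarrow> nat \<Rightarrow> nat \<Rightarrow> tableau \<Rightarrow> tableau option" where
  "tab_f k l j m = map_option (cols_tab k l) (tf j (tab_cols k l m))"

definition bbar :: "nat \<Rightarrow> nat \<Rightarrow> tableau" where
  "bbar k l = (\<lambda>i i'. if 1 \<le> i \<and> i \<le> k \<and> 1 \<le> i' \<and> i' \<le> l then i else 0)"

definition idx :: "nat \<Rightarrow> nat \<Rightarrow> nat \<Rightarrow> nat" where
  "idx n k a = k - (a - 1) div (n + 1 - k) + (a - 1) mod (n + 1 - k)"

fun Bset :: "nat \<Rightarrow> nat \<Rightarrow> nat \<Rightarrow> nat \<Rightarrow> tableau set" where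
  "Bset n k l 0 = {bbar k l}"
| "Bset n k l (Suc a) =
     {b'. \<exists>b \<in> Bset n k l a. \<exists>N. opow (tab_f k l (idx n k (Suc a))) N b = Some b'}"

fun bseq :: "nat \<Rightarrow> nat \<Rightarrow> nat \<Rightarrow> nat \<Rightarrow> tableau" where
  "bseq n k l 0 = bbar k l"
| "bseq n k l (Suc a) =
     (let f = tab_f k l (idx n k (Suc a))
      in the (opow f (strf f (bseq n k l a)) (bseq n k l a)))"

end

theory Submission
  imports Defs
begin

text \<open>Read a tableau as the tensor product of its columns, so that \<open>f\<^sub>j\<close> changes one
entry \<open>j\<close> into \<open>j + 1\<close> and \<open>e\<^sub>j\<close> undoes such a change. Call a tableau \<open>(p, v)\<close>-capped if
its rows above \<open>p\<close> are frozen (row \<open>i\<close> consists of \<open>i\<close>'s) and the entries of row \<open>p\<close> are at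
most \<open>v\<close>. For \<open>p \<le> j\<close> the \<open>f\<^sub>j\<close>-strings starting in the \<open>(p, j)\<close>-capped tableaux sweep out
exactly the \<open>(p, j + 1)\<close>-capped ones: the frozen entries are smaller than \<open>j\<close>, so \<open>f\<^sub>j\<close> and
\<open>e\<^sub>j\<close> never touch them; and a \<open>(p, j + 1)\<close>-capped tableau that is not \<open>(p, j)\<close>-capped has
\<open>j + 1\<close> and no \<open>j\<close> in its last column, so \<open>e\<^sub>j\<close> is defined on it and, by induction on the
number of columns containing \<open>j + 1\<close>, leads back to a \<open>(p, j)\<close>-capped tableau.
The indices \<open>i\<^sub>a\<close> raise the bound on row \<open>p = k - g\<close> from \<open>p\<close> to \<open>p + k'\<close>, and
\<open>(p, p + k')\<close>-capped is the same as \<open>(p - 1, p - 1)\<close>-capped because row \<open>p\<close> of a tableau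
never exceeds \<open>p + k'\<close>. Likewise \<open>f\<^sub>j\<close> moves the extremal tableau whose row \<open>p\<close> is constantly
\<open>j\<close> through exactly \<open>l\<close> steps to the one whose row \<open>p\<close> is constantly \<open>j + 1\<close>.\<close>

lemma opow_None_mono:
  assumes "opow f n b = None" and "n \<le> m"
  shows "opow f m b = None"
  using assms
proof (induction m)
  case 0
  then show ?case by simp
next
  case (Suc m)
  then show ?case by (cases "n = Suc m") (auto simp: le_Suc_eq)
qed

lemma strf_eqI:
  assumes "opow f N b \<noteq> None" and "opow f (Suc N) b = None"
  shows "strf f b = N"
  unfolding strf_def
proof (rule Greatest_equality)
  show "opow f N b \<noteq> None" by (fact assms(1))
next
  fix y
  assume "opow f y b \<noteq> None"
  then show "y \<le> N"
    using opow_None_mono[OF assms(2), of y] by (cases "Suc N \<le> y") auto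
qed

lemma opow_invariant:
  assumes "opow f N b = Some b'" and "P b"
    and step: "\<And>x y. P x \<Longrightarrow> f x = Some y \<Longrightarrow> P y"
  shows "P b'"
  using assms(1)
proof (induction N arbitrary: b')
  case 0
  then show ?case using assms(2) by simp
next
  case (Suc N)
  then obtain x where "opow f N b = Some x" "f x = Some b'"
    by (cases "opow f N b") auto
  then show ?case using Suc.IH step by blast
qed

definition string_closure :: "('a \<Rightarrow> 'a option) \<Rightarrow> 'a set \<Rightarrow> 'a set" where
  "string_closure f A = {b'. \<exists>b \<in> A. \<exists>N. opow f N b = Some b'}"

section \<open>Single columns\<close>

lemma sorted_nth_less_imp_less:
  assumes "sorted xs" "i < length xs" "j < length xs" "xs ! i < xs ! j"
  shows "i < j"
  using assms sorted_nth_mono[of xs j i] by (metis leD not_le_imp_less)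

definition incr_entry :: "nat \<Rightarrow> nat list \<Rightarrow> nat list" where
  "incr_entry j c = map (\<lambda>x. if x = j then j + 1 else x) c"

definition decr_entry :: "nat \<Rightarrow> nat list \<Rightarrow> nat list" where
  "decr_entry j c = map (\<lambda>x. if x = j + 1 then j else x) c"

lemma length_incr_entry [simp]: "length (incr_entry j c) = length c"
  by (simp add: incr_entry_def)

lemma length_decr_entry [simp]: "length (decr_entry j c) = length c"
  by (simp add: decr_entry_def)

lemma nth_incr_entry: "q < length c \<Longrightarrow> incr_entry j c ! q = (if c ! q = j then j + 1 else c ! q)"
  by (simp add: incr_entry_def)

lemma nth_decr_entry: "q < length c \<Longrightarrow> decr_entry j c ! q = (if c ! q = j + 1 then j else c ! q)"
  by (simp add: decr_entry_def)

lemma notin_incr_entry: "j \<notin> set (incr_entry j c)"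
  by (auto simp: incr_entry_def)

lemma Suc_notin_decr_entry: "Suc j \<notin> set (decr_entry j c)"
  by (auto simp: decr_entry_def)

lemma in_decr_entry: "Suc j \<in> set c \<Longrightarrow> j \<in> set (decr_entry j c)"
  by (force simp: decr_entry_def)

lemma incr_decr_entry: "j \<notin> set c \<Longrightarrow> incr_entry j (decr_entry j c) = c"
  unfolding incr_entry_def decr_entry_def by (induction c) auto

lemma sorted_incr_entry:
  assumes "sorted_wrt (<) c" "Suc j \<notin> set c"
  shows "sorted_wrt (<) (incr_entry j c)"
  unfolding incr_entry_def sorted_wrt_map
  by (rule sorted_wrt_mono_rel[OF _ assms(1)]) (use assms(2) in \<open>auto simp: less_Suc_eq; metis Suc_lessI\<close>)

lemma sorted_decr_entry:
  assumes "sorted_wrt (<) c" "j \<notin> set c"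
  shows "sorted_wrt (<) (decr_entry j c)"
  unfolding decr_entry_def sorted_wrt_map
  by (rule sorted_wrt_mono_rel[OF _ assms(1)]) (use assms(2) in \<open>auto simp: less_Suc_eq; metis Suc_lessI\<close>)

lemma col_f_sorted:
  assumes "sorted_wrt (<) c"
  shows "col_f j c = (if j \<in> set c \<and> Suc j \<notin> set c then Some (incr_entry j c) else None)"
proof -
  have "\<not> sorted_wrt (<) (incr_entry j c)" if "j \<in> set c" "Suc j \<in> set c"
  proof
    assume "sorted_wrt (<) (incr_entry j c)"
    then have "inj_on (\<lambda>x. if x = j then j + 1 else x) (set c)"
      by (simp add: incr_entry_def strict_sorted_iff distinct_map)
    from inj_onD[OF this _ that] show False by simp
  qed
  then show ?thesis
    using sorted_incr_entry[OF assms] unfolding col_f_def incr_entry_def[symmetric] by auto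
qed

lemma col_e_sorted:
  assumes "sorted_wrt (<) c"
  shows "col_e j c = (if Suc j \<in> set c \<and> j \<notin> set c then Some (decr_entry j c) else None)"
proof -
  have "\<not> sorted_wrt (<) (decr_entry j c)" if "j \<in> set c" "Suc j \<in> set c"
  proof
    assume "sorted_wrt (<) (decr_entry j c)"
    then have "inj_on (\<lambda>x. if x = j + 1 then j else x) (set c)"
      by (simp add: decr_entry_def strict_sorted_iff distinct_map)
    from inj_onD[OF this _ that] show False by simp
  qed
  then show ?thesis
    using sorted_decr_entry[OF assms] unfolding col_e_def decr_entry_def[symmetric] by auto
qed

definition col_phi :: "nat \<Rightarrow> nat list \<Rightarrow> nat" where
  "col_phi j c = (if j \<in> set c \<and> Suc j \<notin> set c then 1 else 0)"

definition col_eps :: "nat \<Rightarrow> nat list \<Rightarrow> nat" where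
  "col_eps j c = (if Suc j \<in> set c \<and> j \<notin> set c then 1 else 0)"

lemma strf_col_f:
  assumes "sorted_wrt (<) c"
  shows "strf (col_f j) c = col_phi j c"
proof (cases "j \<in> set c \<and> Suc j \<notin> set c")
  case True
  have "sorted_wrt (<) (incr_entry j c)"
    using sorted_incr_entry[OF assms] True by blast
  then have "strf (col_f j) c = 1"
    using True col_f_sorted[OF assms, of j] notin_incr_entry[of j c]
    by (intro strf_eqI) (auto simp: col_f_sorted)
  then show ?thesis using True by (simp add: col_phi_def)
next
  case False
  then show ?thesis
    using col_f_sorted[OF assms, of j] by (auto simp: col_phi_def intro!: strf_eqI[where N = 0])
qed

lemma strf_col_e:
  assumes "sorted_wrt (<) c"
  shows "strf (col_e j) c = col_eps j c"
proof (cases "Suc j \<in> set c \<and> j \<notin> set c")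
  case True
  have "sorted_wrt (<) (decr_entry j c)"
    using sorted_decr_entry[OF assms] True by blast
  then have "strf (col_e j) c = 1"
    using True col_e_sorted[OF assms, of j] Suc_notin_decr_entry[of j c]
    by (intro strf_eqI) (auto simp: col_e_sorted)
  then show ?thesis using True by (simp add: col_eps_def)
next
  case False
  then show ?thesis
    using col_e_sorted[OF assms, of j] by (auto simp: col_eps_def intro!: strf_eqI[where N = 0])
qed

lemma Suc_notin_dominating_col:
  assumes u: "sorted_wrt (<) u" and v: "sorted_wrt (<) v" and len: "length u = length v"
    and dom: "\<forall>q<length v. v ! q \<le> u ! q" and q: "q < length v"
    and vq: "v ! q = j" and uq: "u ! q = j" and notin: "Suc j \<notin> set v"
  shows "Suc j \<notin> set u"
proof
  assume "Suc j \<in> set u"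
  then obtain q2 where q2: "q2 < length v" "u ! q2 = Suc j"
    using len by (auto simp: in_set_conv_nth)
  have "q < q2"
    using sorted_nth_less_imp_less[OF strict_sorted_imp_sorted[OF u], of q q2] q q2 uq len by simp
  then have "v ! q < v ! q2" using sorted_wrt_nth_less[OF v] q2 by simp
  then have "v ! q2 = Suc j" using dom q2 vq by fastforce
  then show False using notin q2 by (metis nth_mem)
qed

lemma notin_dominated_col:
  assumes u: "sorted_wrt (<) u" and v: "sorted_wrt (<) v" and len: "length u = length v"
    and dom: "\<forall>q<length v. u ! q \<le> v ! q" and q: "q < length v"
    and vq: "v ! q = Suc j" and uq: "u ! q = Suc j" and notin: "j \<notin> set v"
  shows "j \<notin> set u"
proof
  assume "j \<in> set u"
  then obtain q2 where q2: "q2 < length v" "u ! q2 = j"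
    using len by (auto simp: in_set_conv_nth)
  have "q2 < q"
    using sorted_nth_less_imp_less[OF strict_sorted_imp_sorted[OF u], of q2 q] q q2 uq len by simp
  then have "v ! q2 < v ! q" using sorted_wrt_nth_less[OF v] q by simp
  then have "v ! q2 = j" using dom q2 vq by fastforce
  then show False using notin q2 by (metis nth_mem)
qed

section \<open>Tensor products of columns\<close>

abbreviation tphi :: "nat \<Rightarrow> nat list list \<Rightarrow> nat" where
  "tphi j cs \<equiv> fst (tstr j cs)"

abbreviation teps :: "nat \<Rightarrow> nat list list \<Rightarrow> nat" where
  "teps j cs \<equiv> snd (tstr j cs)"

lemma tstr_Cons [simp]:
  "tstr j (c # cs) =
     (tphi j cs + (strf (col_f j) c - teps j cs), strf (col_e j) c + (teps j cs - strf (col_f j) c))"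
  by (simp add: Let_def split: prod.split)

declare tstr.simps(2) [simp del]

fun te :: "nat \<Rightarrow> nat list list \<Rightarrow> nat list list option" where
  "te j [] = None"
| "te j (c # cs) =
     (if strf (col_f j) c \<ge> teps j cs
      then map_option (\<lambda>c'. c' # cs) (col_e j c)
      else map_option (\<lambda>cs'. c # cs') (te j cs))"

lemma te_inverse_tf:
  assumes "\<forall>c \<in> set cs. sorted_wrt (<) c" and "te j cs = Some cs'"
  shows "tf j cs' = Some cs \<and> tstr j cs' = (tphi j cs + 1, teps j cs - 1)
    \<and> (\<forall>c \<in> set cs'. sorted_wrt (<) c)"
  using assms
proof (induction cs arbitrary: cs')
  case Nil
  then show ?case by simp
next
  case (Cons c cs)
  have sc: "sorted_wrt (<) c" and scs: "\<forall>c \<in> set cs. sorted_wrt (<) c"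
    using Cons.prems by auto
  show ?case
  proof (cases "strf (col_f j) c \<ge> teps j cs")
    case True
    with Cons.prems obtain c' where ce: "col_e j c = Some c'" and cs': "cs' = c' # cs" by auto
    from ce have j: "Suc j \<in> set c" "j \<notin> set c" and c': "c' = decr_entry j c"
      using col_e_sorted[OF sc, of j] by (auto split: if_splits)
    have sc': "sorted_wrt (<) (decr_entry j c)" using sorted_decr_entry[OF sc j(2)] .
    have cf: "col_f j c' = Some c"
      using col_f_sorted[OF sc', of j] c' in_decr_entry[OF j(1)] Suc_notin_decr_entry[of j c]
        incr_decr_entry[OF j(2)] by simp
    have strs: "strf (col_f j) c = 0" "strf (col_e j) c = 1"
      "strf (col_f j) c' = 1" "strf (col_e j) c' = 0"
      unfolding c' using j in_decr_entry[OF j(1)] Suc_notin_decr_entry[of j c]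
      by (simp_all add: strf_col_f[OF sc] strf_col_e[OF sc] strf_col_f[OF sc'] strf_col_e[OF sc']
          col_phi_def col_eps_def)
    have "teps j cs = 0" using True strs by simp
    then show ?thesis using cs' c' cf strs sc' scs by simp
  next
    case False
    with Cons.prems obtain cs'' where te: "te j cs = Some cs''" and cs': "cs' = c # cs''" by auto
    from Cons.IH[OF scs te] False cs' sc show ?thesis by auto
  qed
qed

lemma te_not_None:
  assumes "\<forall>c \<in> set cs. sorted_wrt (<) c" and "0 < teps j cs"
  shows "te j cs \<noteq> None"
  using assms
proof (induction cs)
  case Nil
  then show ?case by simp
next
  case (Cons c cs)
  have sc: "sorted_wrt (<) c" using Cons.prems by simp
  show ?case
  proof (cases "strf (col_f j) c \<ge> teps j cs")
    case True
    then have "0 < col_eps j c" using Cons.prems(2) strf_col_e[OF sc] by simp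
    then show ?thesis using True col_e_sorted[OF sc, of j] by (simp add: col_eps_def split: if_splits)
  next
    case False
    then show ?thesis using Cons by auto
  qed
qed

lemma tf_Some_incr_column:
  assumes "\<forall>c \<in> set cs. sorted_wrt (<) c" and "tf j cs = Some cs'"
  shows "\<exists>i < length cs. j \<in> set (cs ! i) \<and> Suc j \<notin> set (cs ! i)
    \<and> cs' = cs[i := incr_entry j (cs ! i)] \<and> teps j (drop (Suc i) cs) = 0
    \<and> (\<forall>i' < i. col_phi j (cs ! i') \<le> teps j (drop (Suc i') cs))"
  using assms
proof (induction cs arbitrary: cs')
  case Nil
  then show ?case by simp
next
  case (Cons c cs)
  have sc: "sorted_wrt (<) c" and scs: "\<forall>c \<in> set cs. sorted_wrt (<) c"
    using Cons.prems by auto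
  show ?case
  proof (cases "col_phi j c > teps j cs")
    case True
    with Cons.prems(2) obtain c' where "col_f j c = Some c'" "cs' = c' # cs"
      by (auto simp: strf_col_f[OF sc])
    moreover have "teps j cs = 0" using True by (simp add: col_phi_def split: if_splits)
    ultimately show ?thesis
      using col_f_sorted[OF sc, of j] by (intro exI[of _ 0]) (auto split: if_splits)
  next
    case False
    with Cons.prems(2) obtain cs'' where tf: "tf j cs = Some cs''" and cs': "cs' = c # cs''"
      by (auto simp: strf_col_f[OF sc])
    from Cons.IH[OF scs tf] obtain i where i: "i < length cs" "j \<in> set (cs ! i)"
      "Suc j \<notin> set (cs ! i)" "cs'' = cs[i := incr_entry j (cs ! i)]"
      "teps j (drop (Suc i) cs) = 0" "\<forall>i' < i. col_phi j (cs ! i') \<le> teps j (drop (Suc i') cs)"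
      by blast
    have "\<forall>i' < Suc i. col_phi j ((c # cs) ! i') \<le> teps j (drop (Suc i') (c # cs))"
      using i(6) False by (auto simp: less_Suc_eq_0_disj)
    then show ?thesis using i cs' by (intro exI[of _ "Suc i"]) auto
  qed
qed

lemma te_Some_decr_column:
  assumes "\<forall>c \<in> set cs. sorted_wrt (<) c" and "te j cs = Some cs'"
  shows "\<exists>i < length cs. Suc j \<in> set (cs ! i) \<and> j \<notin> set (cs ! i)
    \<and> cs' = cs[i := decr_entry j (cs ! i)] \<and> teps j (drop (Suc i) cs) = 0"
  using assms
proof (induction cs arbitrary: cs')
  case Nil
  then show ?case by simp
next
  case (Cons c cs)
  have sc: "sorted_wrt (<) c" and scs: "\<forall>c \<in> set cs. sorted_wrt (<) c"
    using Cons.prems by auto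
  show ?case
  proof (cases "col_phi j c \<ge> teps j cs")
    case True
    with Cons.prems(2) obtain c' where ce: "col_e j c = Some c'" and cs': "cs' = c' # cs"
      by (auto simp: strf_col_f[OF sc])
    then have "Suc j \<in> set c" "j \<notin> set c" "c' = decr_entry j c"
      using col_e_sorted[OF sc, of j] by (auto split: if_splits)
    moreover from this have "teps j cs = 0" using True by (simp add: col_phi_def)
    ultimately show ?thesis using cs' by (intro exI[of _ 0]) auto
  next
    case False
    with Cons.prems(2) obtain cs'' where "te j cs = Some cs''" and cs': "cs' = c # cs''"
      by (auto simp: strf_col_f[OF sc])
    with Cons.IH[OF scs] show ?thesis by (fastforce intro: exI[of _ "Suc i" for i])
  qed
qed

lemma te_decreases_cols_with_Suc:
  assumes "\<forall>c \<in> set cs. sorted_wrt (<) c" and "te j cs = Some cs'"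
  shows "length (filter (\<lambda>c. Suc j \<in> set c) cs') < length (filter (\<lambda>c. Suc j \<in> set c) cs)"
  using assms
proof (induction cs arbitrary: cs')
  case Nil
  then show ?case by simp
next
  case (Cons c cs)
  have sc: "sorted_wrt (<) c" and scs: "\<forall>c \<in> set cs. sorted_wrt (<) c"
    using Cons.prems by auto
  show ?case
  proof (cases "strf (col_f j) c \<ge> teps j cs")
    case True
    with Cons.prems obtain c' where ce: "col_e j c = Some c'" and cs': "cs' = c' # cs" by auto
    from ce have "Suc j \<in> set c" "c' = decr_entry j c"
      using col_e_sorted[OF sc, of j] by (auto split: if_splits)
    then show ?thesis using cs' Suc_notin_decr_entry[of j c] by simp
  next
    case False
    with Cons.prems obtain cs'' where "te j cs = Some cs''" and "cs' = c # cs''" by auto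
    with Cons.IH[OF scs] show ?thesis by simp
  qed
qed

lemma tf_map_length:
  "tf j cs = Some cs' \<Longrightarrow> map length cs' = map length cs"
  by (induction cs arbitrary: cs') (auto simp: col_f_def split: if_splits)

text \<open>Column words of \<open>k \<times> l\<close> semistandard tableaux with entries in \<open>{1..n+1}\<close>, in the
order of \<open>tab_cols\<close>: \<open>cs ! t\<close> is column \<open>l - t\<close>, and \<open>cs ! t ! q\<close> its entry in row \<open>q + 1\<close>.\<close>

definition ssyt_cols :: "nat \<Rightarrow> nat \<Rightarrow> nat \<Rightarrow> nat list list \<Rightarrow> bool" where
  "ssyt_cols n k l cs \<longleftrightarrow> length cs = l
     \<and> (\<forall>t<l. length (cs ! t) = k \<and> sorted_wrt (<) (cs ! t)
        \<and> (\<forall>q<k. 1 \<le> cs ! t ! q \<and> cs ! t ! q \<le> n + 1))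
     \<and> (\<forall>t q. Suc t < l \<longrightarrow> q < k \<longrightarrow> cs ! Suc t ! q \<le> cs ! t ! q)"

lemma ssyt_cols_sorted: "ssyt_cols n k l cs \<Longrightarrow> \<forall>c \<in> set cs. sorted_wrt (<) c"
  by (auto simp: ssyt_cols_def in_set_conv_nth)

lemma ssyt_cols_le_first:
  assumes "ssyt_cols n k l cs" "t < l" "q < k"
  shows "cs ! t ! q \<le> cs ! 0 ! q"
  using assms(2)
proof (induction t)
  case 0
  then show ?case by simp
next
  case (Suc t)
  then show ?case using assms(1,3) by (fastforce simp: ssyt_cols_def)
qed

lemma ssyt_cols_le_prev:
  assumes "ssyt_cols n k l cs" "0 < t" "t < l" "q < k"
  shows "cs ! t ! q \<le> cs ! (t - 1) ! q"
proof -
  obtain s where "t = Suc s" using assms(2) gr0_conv_Suc by blast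
  then show ?thesis using assms by (simp add: ssyt_cols_def)
qed

lemma ssyt_cols_update:
  assumes cs: "ssyt_cols n k l cs" and i: "i < l"
    and c: "length c = k" "sorted_wrt (<) c" "\<forall>q<k. 1 \<le> c ! q \<and> c ! q \<le> n + 1"
    and right: "Suc i < l \<Longrightarrow> \<forall>q<k. cs ! Suc i ! q \<le> c ! q"
    and left: "0 < i \<Longrightarrow> \<forall>q<k. c ! q \<le> cs ! (i - 1) ! q"
  shows "ssyt_cols n k l (cs[i := c])"
proof -
  have rows: "cs[i := c] ! Suc t ! q \<le> cs[i := c] ! t ! q" if "Suc t < l" "q < k" for t q
  proof -
    consider "t = i" | "Suc t = i" | "t \<noteq> i" "Suc t \<noteq> i" by blast
    then show ?thesis
    proof cases
      case 1
      then show ?thesis using that right cs by (simp add: ssyt_cols_def)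
    next
      case 2
      then show ?thesis using that left cs by (auto simp: ssyt_cols_def)
    next
      case 3
      then show ?thesis using that cs by (simp add: ssyt_cols_def)
    qed
  qed
  have cols: "length (cs[i := c] ! t) = k \<and> sorted_wrt (<) (cs[i := c] ! t)
      \<and> (\<forall>q<k. 1 \<le> cs[i := c] ! t ! q \<and> cs[i := c] ! t ! q \<le> n + 1)" if "t < l" for t
    using cs c that i by (cases "t = i") (simp_all add: ssyt_cols_def)
  show ?thesis
    using cs rows cols by (simp add: ssyt_cols_def)
qed

lemma tf_ssyt_cols:
  assumes cs: "ssyt_cols n k l cs" and j: "j \<le> n" and tf: "tf j cs = Some cs'"
  shows "ssyt_cols n k l cs'"
proof -
  obtain i where i: "i < length cs" "j \<in> set (cs ! i)" "Suc j \<notin> set (cs ! i)"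
      "cs' = cs[i := incr_entry j (cs ! i)]" "teps j (drop (Suc i) cs) = 0"
      "\<forall>i' < i. col_phi j (cs ! i') \<le> teps j (drop (Suc i') cs)"
    using tf_Some_incr_column[OF ssyt_cols_sorted[OF cs] tf] by blast
  define v where "v = cs ! i"
  have il: "i < l" using i(1) cs by (simp add: ssyt_cols_def)
  have v: "length v = k" "sorted_wrt (<) v" "\<forall>q<k. 1 \<le> v ! q \<and> v ! q \<le> n + 1"
    using cs il by (simp_all add: ssyt_cols_def v_def)
  have left: "incr_entry j v ! q \<le> cs ! (i - 1) ! q" if "0 < i" "q < k" for q
  proof -
    define u where "u = cs ! (i - 1)"
    have u: "length u = k" "sorted_wrt (<) u" "\<forall>q<k. v ! q \<le> u ! q"
      using cs il that ssyt_cols_le_prev[OF cs \<open>0 < i\<close> il]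
      by (auto simp: ssyt_cols_def u_def v_def)
    have "u ! q \<noteq> j" if vq: "v ! q = j"
    proof
      assume uq: "u ! q = j"
      have "Suc j \<notin> set u"
        using Suc_notin_dominating_col[OF u(2) v(2)] u v vq uq \<open>q < k\<close> i(3) by (simp add: v_def)
      moreover have "j \<in> set u" using uq \<open>q < k\<close> u(1) by (metis nth_mem)
      moreover have "col_phi j u \<le> teps j (drop i cs)"
        using i(6) \<open>0 < i\<close> by (auto simp: u_def elim!: allE[of _ "i - 1"])
      moreover have "drop i cs = v # drop (Suc i) cs" using i(1) by (simp add: v_def Cons_nth_drop_Suc)
      ultimately show False
        using i(2,5) strf_col_e[OF v(2)] by (simp add: col_phi_def col_eps_def v_def)
    qed
    then show ?thesis using u(3) that v(1) by (fastforce simp: nth_incr_entry u_def)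
  qed
  have right: "cs ! Suc i ! q \<le> incr_entry j v ! q" if "Suc i < l" "q < k" for q
  proof -
    have "cs ! Suc i ! q \<le> v ! q" using cs that by (simp add: ssyt_cols_def v_def)
    then show ?thesis using that v(1) by (simp add: nth_incr_entry)
  qed
  have "\<forall>q<k. 1 \<le> incr_entry j v ! q \<and> incr_entry j v ! q \<le> n + 1"
    using v j by (simp add: nth_incr_entry)
  then show ?thesis
    using ssyt_cols_update[OF cs il _ sorted_incr_entry[OF v(2)]] v(1) i(3,4) left right
    by (simp add: v_def)
qed

lemma te_ssyt_cols:
  assumes cs: "ssyt_cols n k l cs" and j: "1 \<le> j" and te: "te j cs = Some cs'"
  shows "ssyt_cols n k l cs'"
proof -
  obtain i where i: "i < length cs" "Suc j \<in> set (cs ! i)" "j \<notin> set (cs ! i)"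
      "cs' = cs[i := decr_entry j (cs ! i)]" "teps j (drop (Suc i) cs) = 0"
    using te_Some_decr_column[OF ssyt_cols_sorted[OF cs] te] by blast
  define v where "v = cs ! i"
  have il: "i < l" using i(1) cs by (simp add: ssyt_cols_def)
  have v: "length v = k" "sorted_wrt (<) v" "\<forall>q<k. 1 \<le> v ! q \<and> v ! q \<le> n + 1"
    using cs il by (simp_all add: ssyt_cols_def v_def)
  have right: "cs ! Suc i ! q \<le> decr_entry j v ! q" if si: "Suc i < l" and "q < k" for q
  proof -
    define u where "u = cs ! Suc i"
    have u: "length u = k" "sorted_wrt (<) u" "\<forall>q<k. u ! q \<le> v ! q"
      using cs si by (auto simp: ssyt_cols_def u_def v_def)
    have "u ! q \<noteq> Suc j" if vq: "v ! q = Suc j"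
    proof
      assume uq: "u ! q = Suc j"
      have "j \<notin> set u"
        using notin_dominated_col[OF u(2) v(2)] u v vq uq \<open>q < k\<close> i(3) by (simp add: v_def)
      moreover have "Suc j \<in> set u" using uq \<open>q < k\<close> u(1) by (metis nth_mem)
      moreover have "drop (Suc i) cs = u # drop (Suc (Suc i)) cs"
        using si cs by (simp add: u_def ssyt_cols_def Cons_nth_drop_Suc)
      ultimately show False using i(5) strf_col_e[OF u(2)] by (simp add: col_eps_def)
    qed
    then show ?thesis using u(3) that v(1) by (fastforce simp: nth_decr_entry u_def)
  qed
  have left: "decr_entry j v ! q \<le> cs ! (i - 1) ! q" if "0 < i" "q < k" for q
  proof -
    have "v ! q \<le> cs ! (i - 1) ! q" using ssyt_cols_le_prev[OF cs that(1) il that(2)] by (simp add: v_def)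
    then show ?thesis using that v(1) by (simp add: nth_decr_entry)
  qed
  have "\<forall>q<k. 1 \<le> decr_entry j v ! q \<and> decr_entry j v ! q \<le> n + 1"
    using v j by (fastforce simp: nth_decr_entry)
  then show ?thesis
    using ssyt_cols_update[OF cs il _ sorted_decr_entry[OF v(2)]] v(1) i(3,4) left right
    by (simp add: v_def)
qed

section \<open>Capped tableaux\<close>

definition capped_col :: "nat \<Rightarrow> nat \<Rightarrow> nat list \<Rightarrow> bool" where
  "capped_col p v c \<longleftrightarrow> (\<forall>q. Suc q < p \<longrightarrow> c ! q = Suc q) \<and> c ! (p - 1) \<le> v"

definition capped_cols :: "nat \<Rightarrow> nat \<Rightarrow> nat \<Rightarrow> nat \<Rightarrow> nat \<Rightarrow> nat list list set" where
  "capped_cols n k l p v = {cs. ssyt_cols n k l cs \<and> (\<forall>t<l. capped_col p v (cs ! t))}"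

lemma capped_cols_mono: "v \<le> v' \<Longrightarrow> capped_cols n k l p v \<subseteq> capped_cols n k l p v'"
  by (force simp: capped_cols_def capped_col_def)

lemma capped_col_incr_entry:
  assumes "capped_col p (Suc j) c" "1 \<le> p" "p \<le> length c" "p \<le> j"
  shows "capped_col p (Suc j) (incr_entry j c)"
  using assms by (auto simp: capped_col_def nth_incr_entry)

lemma capped_col_decr_entry:
  assumes "capped_col p (Suc j) c" "1 \<le> p" "p \<le> length c" "p \<le> j"
  shows "capped_col p (Suc j) (decr_entry j c)"
  using assms by (auto simp: capped_col_def nth_decr_entry)

lemma tf_capped_cols:
  assumes cs: "cs \<in> capped_cols n k l p (Suc j)" and tf: "tf j cs = Some cs'"
    and p: "1 \<le> p" "p \<le> k" "p \<le> j" "j \<le> n"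
  shows "cs' \<in> capped_cols n k l p (Suc j)"
proof -
  have w: "ssyt_cols n k l cs" using cs by (simp add: capped_cols_def)
  obtain i where i: "i < length cs" "cs' = cs[i := incr_entry j (cs ! i)]"
    using tf_Some_incr_column[OF ssyt_cols_sorted[OF w] tf] by blast
  have "capped_col p (Suc j) (cs' ! t)" if "t < l" for t
    using cs that p w i capped_col_incr_entry[of p j "cs ! t"]
    by (cases "t = i") (auto simp: capped_cols_def ssyt_cols_def)
  then show ?thesis using tf_ssyt_cols[OF w p(4) tf] by (simp add: capped_cols_def)
qed

lemma te_capped_cols:
  assumes cs: "cs \<in> capped_cols n k l p (Suc j)" and te: "te j cs = Some cs'"
    and p: "1 \<le> p" "p \<le> k" "p \<le> j"
  shows "cs' \<in> capped_cols n k l p (Suc j)"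
proof -
  have w: "ssyt_cols n k l cs" using cs by (simp add: capped_cols_def)
  obtain i where i: "i < length cs" "cs' = cs[i := decr_entry j (cs ! i)]"
    using te_Some_decr_column[OF ssyt_cols_sorted[OF w] te] by blast
  have "capped_col p (Suc j) (cs' ! t)" if "t < l" for t
    using cs that p w i capped_col_decr_entry[of p j "cs ! t"]
    by (cases "t = i") (auto simp: capped_cols_def ssyt_cols_def)
  moreover have "1 \<le> j" using p by simp
  ultimately show ?thesis using te_ssyt_cols[OF w _ te] by (simp add: capped_cols_def)
qed

text \<open>If the bound \<open>j + 1\<close> on row \<open>p\<close> is attained, it is attained in the first tensor
factor (the last column), which then contains \<open>j + 1\<close> but not \<open>j\<close>.\<close>

lemma teps_pos_if_not_capped:
  assumes cs: "cs \<in> capped_cols n k l p (Suc j)" and not: "cs \<notin> capped_cols n k l p j"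
    and p: "1 \<le> p" "p \<le> k" "p \<le> j"
  shows "0 < teps j cs"
proof -
  have w: "ssyt_cols n k l cs" using cs by (simp add: capped_cols_def)
  from cs not obtain t where t: "t < l" "\<not> cs ! t ! (p - 1) \<le> j"
    by (auto simp: capped_cols_def capped_col_def)
  define c where "c = cs ! 0"
  have l0: "0 < l" using t by simp
  have c: "sorted_wrt (<) c" "length c = k" "capped_col p (Suc j) c"
    using w cs l0 by (auto simp: ssyt_cols_def capped_cols_def c_def)
  have "cs ! t ! (p - 1) \<le> c ! (p - 1)" using ssyt_cols_le_first[OF w t(1)] p by (simp add: c_def)
  then have cp: "c ! (p - 1) = Suc j" using t c(3) by (simp add: capped_col_def)
  then have "Suc j \<in> set c" using p c(2) by (metis diff_less less_le_trans nth_mem zero_less_one)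
  moreover have "j \<notin> set c"
  proof
    assume "j \<in> set c"
    then obtain q where q: "q < k" "c ! q = j" using c(2) by (auto simp: in_set_conv_nth)
    have "q < p - 1"
      using sorted_nth_less_imp_less[OF strict_sorted_imp_sorted[OF c(1)], of q "p - 1"] q cp p c(2)
      by simp
    then show False using c(3) q p by (simp add: capped_col_def)
  qed
  moreover have "cs = c # drop 1 cs" using l0 w by (simp add: c_def ssyt_cols_def Cons_nth_drop_Suc)
  ultimately show ?thesis using strf_col_e[OF c(1)] by (metis col_eps_def tstr_Cons snd_conv add_gr_0 zero_less_one)
qed

lemma capped_cols_reachable:
  assumes p: "1 \<le> p" "p \<le> k" "p \<le> j" "j \<le> n"
  shows "cs \<in> capped_cols n k l p (Suc j) \<Longrightarrow>
    \<exists>cs0 \<in> capped_cols n k l p j. \<exists>N. opow (tf j) N cs0 = Some cs"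
proof (induction "length (filter (\<lambda>c. Suc j \<in> set c) cs)" arbitrary: cs rule: less_induct)
  case less
  show ?case
  proof (cases "cs \<in> capped_cols n k l p j")
    case True
    then show ?thesis by (intro bexI[of _ cs] exI[of _ 0]) auto
  next
    case False
    have sorted: "\<forall>c \<in> set cs. sorted_wrt (<) c"
      using less.prems ssyt_cols_sorted unfolding capped_cols_def by blast
    obtain cs1 where te: "te j cs = Some cs1"
      using te_not_None[OF sorted teps_pos_if_not_capped[OF less.prems False p(1-3)]] by blast
    have "cs1 \<in> capped_cols n k l p (Suc j)" using te_capped_cols[OF less.prems te p(1-3)] .
    with less.hyps[OF te_decreases_cols_with_Suc[OF sorted te]]
    obtain cs0 N where "cs0 \<in> capped_cols n k l p j" "opow (tf j) N cs0 = Some cs1"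
      by blast
    moreover have "tf j cs1 = Some cs" using te_inverse_tf[OF sorted te] by simp
    ultimately show ?thesis by (intro bexI[of _ cs0] exI[of _ "Suc N"]) auto
  qed
qed

lemma opow_tf_capped_cols:
  assumes "cs0 \<in> capped_cols n k l p j" and "opow (tf j) N cs0 = Some cs"
    and p: "1 \<le> p" "p \<le> k" "p \<le> j" "j \<le> n"
  shows "cs \<in> capped_cols n k l p (Suc j)"
proof (rule opow_invariant[OF assms(2)])
  show "cs0 \<in> capped_cols n k l p (Suc j)" using assms(1) capped_cols_mono[of j "Suc j" n k l p] by auto
qed (use tf_capped_cols p in blast)

definition shape :: "nat \<Rightarrow> nat \<Rightarrow> nat list list \<Rightarrow> bool" where
  "shape k l cs \<longleftrightarrow> length cs = l \<and> (\<forall>t<l. length (cs ! t) = k)"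

lemma tf_shape:
  assumes "tf j cs = Some cs'" and "shape k l cs"
  shows "shape k l cs'"
proof -
  have "map length cs' = map length cs" using tf_map_length[OF assms(1)] .
  then have "length cs' = length cs" "\<forall>t < length cs. length (cs' ! t) = length (cs ! t)"
    by (metis length_map, metis length_map nth_map)
  then show ?thesis using assms(2) by (simp add: shape_def)
qed

lemma ssyt_cols_shape: "ssyt_cols n k l cs \<Longrightarrow> shape k l cs"
  by (simp add: ssyt_cols_def shape_def)

lemma length_tab_cols [simp]: "length (tab_cols k l m) = l"
  by (simp add: tab_cols_def)

lemma tab_cols_nth:
  assumes "t < l"
  shows "length (tab_cols k l m ! t) = k"
    and "q < k \<Longrightarrow> tab_cols k l m ! t ! q = m (Suc q) (l - t)"
proof -
  have "rev [1..<l+1] ! t = l - t" using assms by (simp add: rev_nth del: upt_Suc)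
  then show "length (tab_cols k l m ! t) = k" and "q < k \<Longrightarrow> tab_cols k l m ! t ! q = m (Suc q) (l - t)"
    using assms by (simp_all add: tab_cols_def del: upt_Suc)
qed

lemma tab_cols_cols_tab: "shape k l cs \<Longrightarrow> tab_cols k l (cols_tab k l cs) = cs"
  by (rule nth_equalityI) (auto simp: shape_def tab_cols_nth cols_tab_def intro!: nth_equalityI)

lemma cols_tab_tab_cols: "m \<in> SSYT n k l \<Longrightarrow> cols_tab k l (tab_cols k l m) = m"
  by (intro ext) (auto simp: SSYT_def cols_tab_def tab_cols_nth)

lemma SSYT_imp_ssyt_cols:
  assumes m: "m \<in> SSYT n k l"
  shows "ssyt_cols n k l (tab_cols k l m)"
proof -
  have sorted: "sorted_wrt (<) (tab_cols k l m ! t)" if "t < l" for t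
  proof -
    have "\<forall>q. Suc q < k \<longrightarrow> tab_cols k l m ! t ! q < tab_cols k l m ! t ! Suc q"
      using m that by (auto simp: tab_cols_nth SSYT_def)
    then show ?thesis using that by (simp add: sorted_wrt_iff_nth_Suc_transp tab_cols_nth)
  qed
  have rows: "tab_cols k l m ! Suc t ! q \<le> tab_cols k l m ! t ! q" if "Suc t < l" "q < k" for t q
  proof -
    have "m (Suc q) (l - Suc t) \<le> m (Suc q) (l - Suc t + 1)"
      using m that by (simp add: SSYT_def)
    moreover have "l - Suc t + 1 = l - t" using that by simp
    ultimately show ?thesis using that by (simp add: tab_cols_nth)
  qed
  show ?thesis using m sorted rows by (auto simp: ssyt_cols_def tab_cols_nth SSYT_def)
qed

lemma ssyt_cols_imp_SSYT:
  assumes cs: "ssyt_cols n k l cs"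
  shows "cols_tab k l cs \<in> SSYT n k l"
proof -
  have rows: "cols_tab k l cs i i' \<le> cols_tab k l cs i (i' + 1)"
    if "1 \<le> i" "i \<le> k" "1 \<le> i'" "i' < l" for i i'
  proof -
    have "cs ! Suc (l - (i' + 1)) ! (i - 1) \<le> cs ! (l - (i' + 1)) ! (i - 1)"
      using cs that by (simp add: ssyt_cols_def)
    moreover have "Suc (l - (i' + 1)) = l - i'" using that by simp
    ultimately show ?thesis using that by (simp add: cols_tab_def)
  qed
  have cols: "cols_tab k l cs i i' < cols_tab k l cs (i + 1) i'"
    if "1 \<le> i" "i < k" "1 \<le> i'" "i' \<le> l" for i i'
  proof -
    have "sorted_wrt (<) (cs ! (l - i'))" "length (cs ! (l - i')) = k"
      using cs that by (auto simp: ssyt_cols_def)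
    then have "cs ! (l - i') ! (i - 1) < cs ! (l - i') ! i"
      using sorted_wrt_nth_less[of "(<)" "cs ! (l - i')" "i - 1" i] that by simp
    then show ?thesis using that by (simp add: cols_tab_def)
  qed
  have bounds: "1 \<le> cols_tab k l cs i i' \<and> cols_tab k l cs i i' \<le> n + 1"
    if "1 \<le> i" "i \<le> k" "1 \<le> i'" "i' \<le> l" for i i'
    using cs that by (simp add: ssyt_cols_def cols_tab_def)
  have "cols_tab k l cs i i' = 0" if "\<not> (1 \<le> i \<and> i \<le> k \<and> 1 \<le> i' \<and> i' \<le> l)" for i i'
    unfolding cols_tab_def using that by (rule if_not_P)
  with bounds rows cols show ?thesis unfolding SSYT_def by blast
qed

lemma opow_tab_f:
  assumes "shape k l cs"
  shows "opow (tab_f k l j) N (cols_tab k l cs) = map_option (cols_tab k l) (opow (tf j) N cs)"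
proof (induction N)
  case 0
  then show ?case by simp
next
  case (Suc N)
  show ?case
  proof (cases "opow (tf j) N cs")
    case None
    then show ?thesis using Suc by simp
  next
    case (Some cs')
    then have "shape k l cs'" using opow_invariant[where P = "shape k l" and f = "tf j"] assms tf_shape by blast
    then have "tab_f k l j (cols_tab k l cs') = map_option (cols_tab k l) (tf j cs')"
      by (simp add: tab_f_def tab_cols_cols_tab)
    then show ?thesis using Suc Some by simp
  qed
qed

definition capped_SSYT :: "nat \<Rightarrow> nat \<Rightarrow> nat \<Rightarrow> nat \<Rightarrow> nat \<Rightarrow> tableau set" where
  "capped_SSYT n k l p v = {m \<in> SSYT n k l.
     (\<forall>i i'. 1 \<le> i \<and> i < p \<and> 1 \<le> i' \<and> i' \<le> l \<longrightarrow> m i i' = i)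
     \<and> (\<forall>i'. 1 \<le> i' \<and> i' \<le> l \<longrightarrow> m p i' \<le> v)}"

lemma all_less_diff_iff: "(\<forall>t < l. P (l - t)) \<longleftrightarrow> (\<forall>i'. 1 \<le> i' \<and> i' \<le> (l::nat) \<longrightarrow> P i')"
proof
  assume h: "\<forall>t < l. P (l - t)"
  show "\<forall>i'. 1 \<le> i' \<and> i' \<le> l \<longrightarrow> P i'"
  proof (intro allI impI)
    fix i' assume "1 \<le> i' \<and> i' \<le> l"
    then have "l - i' < l" "l - (l - i') = i'" by auto
    then show "P i'" using h by metis
  qed
qed auto

lemma all_Suc_less_iff: "(\<forall>q. Suc q < p \<longrightarrow> P (Suc q)) \<longleftrightarrow> (\<forall>i. 1 \<le> i \<and> i < p \<longrightarrow> P (i::nat))"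
proof
  assume h: "\<forall>q. Suc q < p \<longrightarrow> P (Suc q)"
  show "\<forall>i. 1 \<le> i \<and> i < p \<longrightarrow> P i"
  proof (intro allI impI)
    fix i :: nat
    assume i: "1 \<le> i \<and> i < p"
    then obtain q where "i = Suc q" by (cases i) auto
    then show "P i" using h i by blast
  qed
qed auto

lemma capped_col_tab_cols:
  assumes "t < l" "1 \<le> p" "p \<le> k"
  shows "capped_col p v (tab_cols k l m ! t) \<longleftrightarrow>
    (\<forall>i. 1 \<le> i \<and> i < p \<longrightarrow> m i (l - t) = i) \<and> m p (l - t) \<le> v"
proof -
  have "(\<forall>q. Suc q < p \<longrightarrow> m (Suc q) (l - t) = Suc q) \<longleftrightarrow> (\<forall>i. 1 \<le> i \<and> i < p \<longrightarrow> m i (l - t) = i)"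
    by (rule all_Suc_less_iff)
  then show ?thesis using assms by (simp add: capped_col_def tab_cols_nth)
qed

lemma capped_SSYT_iff_capped_cols:
  assumes m: "m \<in> SSYT n k l" and p: "1 \<le> p" "p \<le> k"
  shows "m \<in> capped_SSYT n k l p v \<longleftrightarrow> tab_cols k l m \<in> capped_cols n k l p v"
proof -
  have "(\<forall>t<l. capped_col p v (tab_cols k l m ! t)) \<longleftrightarrow>
      (\<forall>t<l. (\<forall>i. 1 \<le> i \<and> i < p \<longrightarrow> m i (l - t) = i) \<and> m p (l - t) \<le> v)"
    using capped_col_tab_cols[OF _ p] by simp
  also have "\<dots> \<longleftrightarrow> (\<forall>i'. 1 \<le> i' \<and> i' \<le> l \<longrightarrow> (\<forall>i. 1 \<le> i \<and> i < p \<longrightarrow> m i i' = i) \<and> m p i' \<le> v)"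
    by (rule all_less_diff_iff)
  finally show ?thesis
    using m SSYT_imp_ssyt_cols[OF m] by (auto simp: capped_SSYT_def capped_cols_def)
qed

lemma string_closure_capped_SSYT_subset:
  assumes p: "1 \<le> p" "p \<le> k" "p \<le> j" "j \<le> n"
  shows "string_closure (tab_f k l j) (capped_SSYT n k l p j) \<subseteq> capped_SSYT n k l p (Suc j)"
proof
  fix m'
  assume "m' \<in> string_closure (tab_f k l j) (capped_SSYT n k l p j)"
  then obtain m N where m: "m \<in> capped_SSYT n k l p j" and N: "opow (tab_f k l j) N m = Some m'"
    by (auto simp: string_closure_def)
  have mS: "m \<in> SSYT n k l" using m by (simp add: capped_SSYT_def)
  have cs: "tab_cols k l m \<in> capped_cols n k l p j"
    using capped_SSYT_iff_capped_cols[OF mS p(1,2)] m by simp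
  obtain cs' where N': "opow (tf j) N (tab_cols k l m) = Some cs'" and m': "m' = cols_tab k l cs'"
    using N opow_tab_f[OF ssyt_cols_shape[OF SSYT_imp_ssyt_cols[OF mS]], of j N]
    by (cases "opow (tf j) N (tab_cols k l m)") (auto simp: cols_tab_tab_cols[OF mS])
  have cs': "cs' \<in> capped_cols n k l p (Suc j)" using opow_tf_capped_cols[OF cs N' p] .
  then have "ssyt_cols n k l cs'" by (simp add: capped_cols_def)
  then show "m' \<in> capped_SSYT n k l p (Suc j)"
    using capped_SSYT_iff_capped_cols[OF ssyt_cols_imp_SSYT p(1,2)] cs' m'
    by (simp add: tab_cols_cols_tab ssyt_cols_shape)
qed

lemma capped_SSYT_subset_string_closure:
  assumes p: "1 \<le> p" "p \<le> k" "p \<le> j" "j \<le> n"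
  shows "capped_SSYT n k l p (Suc j) \<subseteq> string_closure (tab_f k l j) (capped_SSYT n k l p j)"
proof
  fix m
  assume m: "m \<in> capped_SSYT n k l p (Suc j)"
  have mS: "m \<in> SSYT n k l" using m by (simp add: capped_SSYT_def)
  have "tab_cols k l m \<in> capped_cols n k l p (Suc j)"
    using capped_SSYT_iff_capped_cols[OF mS p(1,2)] m by simp
  then obtain cs0 N where cs0: "cs0 \<in> capped_cols n k l p j"
    and N: "opow (tf j) N cs0 = Some (tab_cols k l m)"
    using capped_cols_reachable[OF p] by blast
  have w0: "ssyt_cols n k l cs0" using cs0 by (simp add: capped_cols_def)
  have "cols_tab k l cs0 \<in> capped_SSYT n k l p j"
    using capped_SSYT_iff_capped_cols[OF ssyt_cols_imp_SSYT[OF w0] p(1,2)] cs0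
    by (simp add: tab_cols_cols_tab ssyt_cols_shape[OF w0])
  moreover have "opow (tab_f k l j) N (cols_tab k l cs0) = Some m"
    using opow_tab_f[OF ssyt_cols_shape[OF w0], of j N] N cols_tab_tab_cols[OF mS] by simp
  ultimately show "m \<in> string_closure (tab_f k l j) (capped_SSYT n k l p j)"
    by (auto simp: string_closure_def)
qed

lemma string_closure_capped_SSYT:
  assumes "1 \<le> p" "p \<le> k" "p \<le> j" "j \<le> n"
  shows "string_closure (tab_f k l j) (capped_SSYT n k l p j) = capped_SSYT n k l p (Suc j)"
  using string_closure_capped_SSYT_subset[OF assms] capped_SSYT_subset_string_closure[OF assms]
  by (rule subset_antisym)

section \<open>Extremal tableaux\<close>

definition extremal_col :: "nat \<Rightarrow> nat \<Rightarrow> nat \<Rightarrow> nat \<Rightarrow> nat list" where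
  "extremal_col n k p v =
     map (\<lambda>q. if Suc q < p then Suc q else if Suc q = p then v else Suc q + (n + 1 - k)) [0..<k]"

definition extremal_tab :: "nat \<Rightarrow> nat \<Rightarrow> nat \<Rightarrow> nat \<Rightarrow> nat \<Rightarrow> tableau" where
  "extremal_tab n k l p v = (\<lambda>i i'. if 1 \<le> i \<and> i \<le> k \<and> 1 \<le> i' \<and> i' \<le> l then
     (if i < p then i else if i = p then v else i + (n + 1 - k)) else 0)"

lemma extremal_tab_cols_tab: "extremal_tab n k l p v = cols_tab k l (replicate l (extremal_col n k p v))"
  by (intro ext) (auto simp: extremal_tab_def cols_tab_def extremal_col_def)

lemma sorted_extremal_col:
  assumes "1 \<le> p" "p \<le> v" "v \<le> p + (n + 1 - k)"
  shows "sorted_wrt (<) (extremal_col n k p v)"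
  unfolding sorted_wrt_iff_nth_Suc_transp[OF transp_on_less]
  using assms by (auto simp: extremal_col_def)

lemma incr_entry_extremal_col:
  assumes "1 \<le> p" "p \<le> k" "p \<le> j" "j < p + (n + 1 - k)"
  shows "incr_entry j (extremal_col n k p j) = extremal_col n k p (Suc j)"
  using assms by (auto simp: incr_entry_def extremal_col_def)

text \<open>On \<open>c' ^ s \<otimes> c ^ (l - s)\<close>, where \<open>f\<^sub>j c = c'\<close> and only \<open>c\<close> has a positive \<open>\<phi>\<^sub>j\<close>,
the signature rule makes \<open>f\<^sub>j\<close> act on the leftmost factor \<open>c\<close>.\<close>

lemma opow_tf_replicate:
  assumes c': "strf (col_f j) c' = 0" and c: "strf (col_f j) c = 1" "strf (col_e j) c = 0"
    and f: "col_f j c = Some c'"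
  shows "opow (tf j) s (replicate l c) =
    (if s \<le> l then Some (replicate s c' @ replicate (l - s) c) else None)"
proof (induction s)
  case 0
  then show ?case by simp
next
  case (Suc s)
  have tstr: "tstr j (replicate t c) = (t, 0)" for t
    using c by (induction t) auto
  have "tf j (replicate s c' @ replicate (Suc t) c) = Some (replicate (Suc s) c' @ replicate t c)" for t
    using c' c f tstr by (induction s) auto
  moreover have "tf j (replicate s c') = None"
    using c' by (induction s) auto
  moreover have "l - s = Suc (l - Suc s)" if "Suc s \<le> l" using that by simp
  ultimately show ?case using Suc by auto
qed

lemma extremal_tab_step:
  assumes p: "1 \<le> p" "p \<le> k" "p \<le> j" "j < p + (n + 1 - k)"
  shows "strf (tab_f k l j) (extremal_tab n k l p j) = l"
    and "the (opow (tab_f k l j) l (extremal_tab n k l p j)) = extremal_tab n k l p (Suc j)"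
proof -
  define c where "c = extremal_col n k p j"
  define c' where "c' = extremal_col n k p (Suc j)"
  have sc: "sorted_wrt (<) c" "sorted_wrt (<) c'"
    using sorted_extremal_col[of p j n k] sorted_extremal_col[of p "Suc j" n k] p
    by (simp_all add: c_def c'_def)
  have "c ! (p - 1) = j" "p - 1 < length c" using p by (auto simp: c_def extremal_col_def)
  then have "j \<in> set c" by (metis nth_mem)
  moreover have "Suc j \<notin> set c" "j \<notin> set c'" using p by (auto simp: c_def c'_def extremal_col_def)
  ultimately have j_in: "j \<in> set c" "Suc j \<notin> set c" "j \<notin> set c'" by blast+
  have strs: "strf (col_f j) c' = 0" "strf (col_f j) c = 1" "strf (col_e j) c = 0"
    using j_in by (simp_all add: strf_col_f strf_col_e sc col_phi_def col_eps_def)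
  have f: "col_f j c = Some c'"
    using col_f_sorted[OF sc(1)] j_in incr_entry_extremal_col[OF p] by (simp add: c_def c'_def)
  have sh: "shape k l (replicate l c)" by (simp add: shape_def c_def extremal_col_def)
  have "opow (tab_f k l j) s (extremal_tab n k l p j) =
      (if s \<le> l then Some (cols_tab k l (replicate s c' @ replicate (l - s) c)) else None)" for s
    using opow_tab_f[OF sh, of j s] opow_tf_replicate[OF strs f, of s l]
    by (simp add: extremal_tab_cols_tab c_def)
  from this[of l] this[of "Suc l"]
  show "strf (tab_f k l j) (extremal_tab n k l p j) = l"
    and "the (opow (tab_f k l j) l (extremal_tab n k l p j)) = extremal_tab n k l p (Suc j)"
    by (simp_all add: strf_eqI extremal_tab_cols_tab c'_def)
qed

section \<open>The sets \<open>B\<^sub>a\<close> and elements \<open>b\<^sub>a\<close>\<close>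

lemma SSYT_row_ge:
  assumes m: "m \<in> SSYT n k l" and i': "1 \<le> i'" "i' \<le> l"
  shows "1 \<le> i \<Longrightarrow> i \<le> k \<Longrightarrow> i \<le> m i i'"
proof (induction i rule: nat_induct_at_least)
  case base
  then show ?case using m i' by (simp add: SSYT_def)
next
  case (Suc i)
  then have "m i i' < m (i + 1) i'" using m i' by (simp add: SSYT_def)
  with Suc show ?case by simp
qed

lemma SSYT_row_le:
  assumes m: "m \<in> SSYT n k l" and i': "1 \<le> i'" "i' \<le> l" and "k \<le> n + 1"
  shows "1 \<le> i \<Longrightarrow> i \<le> k \<Longrightarrow> m i i' \<le> i + (n + 1 - k)"
proof (induction "k - i" arbitrary: i)
  case 0
  then have "i = k" by simp
  then show ?case using m i' 0 \<open>k \<le> n + 1\<close> by (auto simp: SSYT_def)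
next
  case (Suc d)
  then have "m i i' < m (i + 1) i'" using m i' by (simp add: SSYT_def)
  moreover have "m (i + 1) i' \<le> i + 1 + (n + 1 - k)" using Suc.hyps(1)[of "i + 1"] Suc.hyps(2) by simp
  ultimately show ?case by simp
qed

lemma capped_SSYT_base:
  assumes "1 \<le> k" "k \<le> n + 1"
  shows "capped_SSYT n k l k k = {bbar k l}"
proof (intro set_eqI iffI)
  fix m
  assume m: "m \<in> capped_SSYT n k l k k"
  have mS: "m \<in> SSYT n k l" using m by (simp add: capped_SSYT_def)
  have "m i i' = bbar k l i i'" for i i'
  proof (cases "1 \<le> i \<and> i \<le> k \<and> 1 \<le> i' \<and> i' \<le> l")
    case True
    then have "i < k \<or> i = k" by auto
    then show ?thesis
      using m True SSYT_row_ge[OF mS, of i' i] by (auto simp: capped_SSYT_def bbar_def)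
  next
    case False
    then show ?thesis using mS by (simp add: SSYT_def bbar_def)
  qed
  then show "m \<in> {bbar k l}" by auto
next
  fix m
  assume "m \<in> {bbar k l}"
  then show "m \<in> capped_SSYT n k l k k"
    using assms by (auto simp: capped_SSYT_def bbar_def SSYT_def)
qed

lemma capped_SSYT_shift:
  assumes p: "2 \<le> p" "p \<le> k" and kn: "k \<le> n + 1"
  shows "capped_SSYT n k l (p - 1) (p - 1) = capped_SSYT n k l p (p + (n + 1 - k))"
proof (intro set_eqI iffI)
  fix m
  assume m: "m \<in> capped_SSYT n k l (p - 1) (p - 1)"
  have mS: "m \<in> SSYT n k l" using m by (simp add: capped_SSYT_def)
  have row: "m (p - 1) i' = p - 1" if "1 \<le> i'" "i' \<le> l" for i'
    using SSYT_row_ge[OF mS that, of "p - 1"] m that p by (force simp: capped_SSYT_def)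
  have "m i i' = i" if "1 \<le> i" "i < p" "1 \<le> i'" "i' \<le> l" for i i'
  proof (cases "i < p - 1")
    case True
    then show ?thesis using m that by (simp add: capped_SSYT_def)
  next
    case False
    then have "i = p - 1" using that by simp
    then show ?thesis using row that by simp
  qed
  moreover have "m p i' \<le> p + (n + 1 - k)" if "1 \<le> i'" "i' \<le> l" for i'
    using SSYT_row_le[OF mS that kn, of p] p by simp
  ultimately show "m \<in> capped_SSYT n k l p (p + (n + 1 - k))"
    using mS by (simp add: capped_SSYT_def)
next
  fix m
  assume "m \<in> capped_SSYT n k l p (p + (n + 1 - k))"
  then show "m \<in> capped_SSYT n k l (p - 1) (p - 1)" using p by (auto simp: capped_SSYT_def)
qed

lemma extremal_tab_base: "extremal_tab n k l k k = bbar k l"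
  by (intro ext) (auto simp: extremal_tab_def bbar_def)

lemma extremal_tab_shift:
  "2 \<le> p \<Longrightarrow> extremal_tab n k l (p - 1) (p - 1) = extremal_tab n k l p (p + (n + 1 - k))"
  by (intro ext) (auto simp: extremal_tab_def)

text \<open>The row \<open>k - g\<close> in which \<open>f\<^bsub>i\<^sub>a\<^esub>\<close> acts at step \<open>a\<close>.\<close>

definition active_row :: "nat \<Rightarrow> nat \<Rightarrow> nat \<Rightarrow> nat" where
  "active_row n k a = k - (a - 1) div (n + 1 - k)"

lemma idx_eq_active_row: "idx n k a = active_row n k a + (a - 1) mod (n + 1 - k)"
  by (simp add: idx_def active_row_def)

lemma active_row_bounds:
  assumes "k \<le> n" "1 \<le> a" "a \<le> k * (n + 1 - k)"
  shows "1 \<le> active_row n k a" "active_row n k a \<le> k" "active_row n k a \<le> idx n k a"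
    "idx n k a < active_row n k a + (n + 1 - k)"
proof -
  have "a - 1 < k * (n + 1 - k)" using assms by linarith
  then have "(a - 1) div (n + 1 - k) < k" by (simp add: less_mult_imp_div_less mult.commute)
  moreover have "(a - 1) mod (n + 1 - k) < n + 1 - k" using assms(1) by simp
  ultimately show "1 \<le> active_row n k a" "active_row n k a \<le> k" "active_row n k a \<le> idx n k a"
    "idx n k a < active_row n k a + (n + 1 - k)"
    by (simp_all add: idx_eq_active_row, simp_all add: active_row_def)
qed

lemma active_row_Suc_cases:
  assumes "k \<le> n" "1 \<le> a" "a < k * (n + 1 - k)"
  shows "active_row n k (Suc a) = active_row n k a \<and> idx n k (Suc a) = Suc (idx n k a)
    \<or> 2 \<le> active_row n k a \<and> active_row n k (Suc a) = active_row n k a - 1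
      \<and> idx n k (Suc a) = active_row n k a - 1
      \<and> Suc (idx n k a) = active_row n k a + (n + 1 - k)"
proof -
  define k' where "k' = n + 1 - k"
  obtain x where a: "a = Suc x" using assms(2) by (cases a) auto
  have "a div k' < k" using assms(3) by (simp add: k'_def less_mult_imp_div_less mult.commute)
  show ?thesis
  proof (cases "Suc (x mod k') = k'")
    case False
    then have "a div k' = x div k'" "a mod k' = Suc (x mod k')"
      using a by (simp_all add: div_Suc mod_Suc)
    then show ?thesis using a by (simp add: idx_eq_active_row active_row_def k'_def)
  next
    case True
    then have "a div k' = Suc (x div k')" "a mod k' = 0"
      using a by (simp_all add: div_Suc mod_Suc)
    then have "active_row n k a = k - x div k'" "active_row n k (Suc a) = k - Suc (x div k')"
      "idx n k a = k - x div k' + x mod k'" "idx n k (Suc a) = k - Suc (x div k')"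
      using a by (simp_all add: idx_eq_active_row active_row_def k'_def)
    then show ?thesis
      unfolding k'_def[symmetric] using True \<open>a div k' < k\<close> \<open>a div k' = Suc (x div k')\<close>
      by (intro disjI2 conjI) arith+
  qed
qed

lemma capped_SSYT_active_row_Suc:
  assumes k: "1 \<le> k" "k \<le> n" and a: "1 \<le> a" "a < k * (n + 1 - k)"
  shows "capped_SSYT n k l (active_row n k (Suc a)) (idx n k (Suc a))
      = capped_SSYT n k l (active_row n k a) (Suc (idx n k a))"
    and "extremal_tab n k l (active_row n k (Suc a)) (idx n k (Suc a))
      = extremal_tab n k l (active_row n k a) (Suc (idx n k a))"
proof -
  have "active_row n k a \<le> k" using active_row_bounds(2)[OF k(2) a(1)] a(2) by simp
  with active_row_Suc_cases[OF k(2) a] k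
  show "capped_SSYT n k l (active_row n k (Suc a)) (idx n k (Suc a))
      = capped_SSYT n k l (active_row n k a) (Suc (idx n k a))"
    and "extremal_tab n k l (active_row n k (Suc a)) (idx n k (Suc a))
      = extremal_tab n k l (active_row n k a) (Suc (idx n k a))"
    using capped_SSYT_shift[of "active_row n k a" k n l] extremal_tab_shift[of "active_row n k a" n k l]
    by auto
qed

lemma Bset_bseq_capped:
  assumes k: "1 \<le> k" "k \<le> n" and a: "1 \<le> a" "a \<le> k * (n + 1 - k)"
  shows "Bset n k l a = capped_SSYT n k l (active_row n k a) (Suc (idx n k a))
    \<and> bseq n k l a = extremal_tab n k l (active_row n k a) (Suc (idx n k a))"
  using a
proof (induction a)
  case 0
  then show ?case by simp
next
  case (Suc a)
  define p where "p = active_row n k (Suc a)"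
  define j where "j = idx n k (Suc a)"
  have pj: "1 \<le> p" "p \<le> k" "p \<le> j" "j < p + (n + 1 - k)"
    using active_row_bounds[OF k(2) _ Suc.prems(2)] by (simp_all add: p_def j_def)
  have prev: "Bset n k l a = capped_SSYT n k l p j \<and> bseq n k l a = extremal_tab n k l p j"
  proof (cases "a = 0")
    case True
    then have "p = k" "j = k" by (simp_all add: p_def j_def active_row_def idx_def)
    then show ?thesis using True capped_SSYT_base[of k n l] extremal_tab_base[of n k l] k by simp
  next
    case False
    then have "1 \<le> a" "a < k * (n + 1 - k)" using Suc.prems by simp_all
    then show ?thesis
      using Suc capped_SSYT_active_row_Suc[OF k] by (simp add: p_def j_def)
  qed
  have "Bset n k l (Suc a) = string_closure (tab_f k l j) (Bset n k l a)"
    by (simp add: string_closure_def j_def)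
  also have "\<dots> = capped_SSYT n k l p (Suc j)"
    using string_closure_capped_SSYT[OF pj(1-3), of n l] prev pj(2,4) k by simp
  finally show ?case
    using extremal_tab_step[OF pj, of l] prev by (simp add: p_def j_def Let_def)
qed

theorem mainTheorem3:
  fixes n k l a :: nat
  assumes "1 \<le> n" and "1 \<le> k" and "k \<le> n" and "1 \<le> l"
    and "1 \<le> a" and "a \<le> k * (n + 1 - k)"
  shows "let k' = n + 1 - k; g = (a - 1) div k'; r = (a - 1) - k' * g in
     Bset n k l a = {m \<in> SSYT n k l.
        (\<forall>i i'. 1 \<le> i \<and> i < k - g \<and> 1 \<le> i' \<and> i' \<le> l \<longrightarrow> m i i' = i)
      \<and> (\<forall>i'. 1 \<le> i' \<and> i' \<le> l \<longrightarrow> m (k - g) i' \<le> k - g + r + 1)}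
   \<and> bseq n k l a = (\<lambda>i i'. if 1 \<le> i \<and> i \<le> k \<and> 1 \<le> i' \<and> i' \<le> l then
        (if i < k - g then i else if i = k - g then k - g + r + 1 else i + k') else 0)"
proof -
  have r: "(a - 1) - (n + 1 - k) * ((a - 1) div (n + 1 - k)) = (a - 1) mod (n + 1 - k)"
    by (metis minus_div_mult_eq_mod mult.commute)
  have "Bset n k l a = capped_SSYT n k l (k - (a - 1) div (n + 1 - k))
        (k - (a - 1) div (n + 1 - k) + (a - 1) mod (n + 1 - k) + 1)
      \<and> bseq n k l a = extremal_tab n k l (k - (a - 1) div (n + 1 - k))
        (k - (a - 1) div (n + 1 - k) + (a - 1) mod (n + 1 - k) + 1)"
    using Bset_bseq_capped[OF assms(2,3,5,6)]
    by (simp only: idx_eq_active_row active_row_def Suc_eq_plus1)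
  then show ?thesis
    unfolding Let_def r by (simp only: capped_SSYT_def extremal_tab_def)
qed

end
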